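(* Let $\preceq$ be an $\omega$-recognizable preorder over $\Sigma$ and $\sim$ its induced equivalence relation. Then every equivalence class of $\sim$ contains a lasso (an ultimately periodic word $\mu(\nu)^\omega$ with $\mu,\nu\in\Sigma^*$, $\nu$ nonempty). Moreover, for every $x\in\Sigma^\omega$ there exists a prefix $\mu\nu$ of $x$ such that $x\sim\mu(\nu)^\omega$.
   Context: A relation on $\Sigma^\omega$ is $\omega$-recognizable if it equals $\bigcup_{k=1}^{\ell}X_k\times Y_k$ with $X_k,Y_k\subseteq\Sigma^\omega$ $\omega$-regular. A preorder is reflexive and transitive; $x\sim y$ iff $x\preceq y$ and $y\preceq x$. *)

theory Defs
  imports Main "HOL-Library.Omega_Words_Fun"
begin

definition buchi_lang ::
  "nat set \<Rightarrow> (nat \<Rightarrow> 'a \<Rightarrow> nat set) \<Rightarrow> nat set \<Rightarrow> 'a word set" where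
  "buchi_lang I \<delta> F =
     {w. \<exists>r::nat \<Rightarrow> nat. r 0 \<in> I \<and> (\<forall>i. r (Suc i) \<in> \<delta> (r i) (w i))
                   \<and> (\<exists>\<^sub>\<infinity>i. r i \<in> F)}"

definition omega_regular :: "('a::finite) word set \<Rightarrow> bool" where
  "omega_regular L \<longleftrightarrow>
     (\<exists>(Q::nat set) I \<delta> F. finite Q \<and> I \<subseteq> Q \<and> F \<subseteq> Q \<and>
        (\<forall>q a. q \<in> Q \<longrightarrow> \<delta> q a \<subseteq> Q) \<and> L = buchi_lang I \<delta> F)"

definition omega_recognizable :: "(('a::finite) word \<times> 'a word) set \<Rightarrow> bool" where
  "omega_recognizable R \<longleftrightarrow>
     (\<exists>(l::nat) X Y. (\<forall>k\<in>{1..l}. omega_regular (X k) \<and> omega_regular (Y k)) \<and>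
        R = (\<Union>k\<in>{1..l}. X k \<times> Y k))"

definition induced_equiv :: "('b \<times> 'b) set \<Rightarrow> 'b \<Rightarrow> 'b \<Rightarrow> bool" where
  "induced_equiv R x y \<longleftrightarrow> (x, y) \<in> R \<and> (y, x) \<in> R"

end

theory Submission
  imports Defs
begin

text \<open>Since \<open>x \<preceq> x\<close>, the word \<open>x\<close> lies in \<open>X\<^sub>k \<inter> Y\<^sub>k\<close> for some \<open>k\<close>. Run Buechi
  automata for \<open>X\<^sub>k\<close> and \<open>Y\<^sub>k\<close> on \<open>x\<close> side by side: some pair of states recurs at
  positions \<open>i < j\<close> such that both automata visit accepting states in between.
  Pumping the segment \<open>x[i,j)\<close> gives a lasso accepted by both automata, hence related
  to \<open>x\<close> in both directions through \<open>X\<^sub>k \<times> Y\<^sub>k\<close>.\<close>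

definition lasso_pos :: "nat \<Rightarrow> nat \<Rightarrow> nat \<Rightarrow> nat" where
  "lasso_pos i j n = (if n < i then n else i + (n - i) mod (j - i))"

lemma lasso_pos_0 [simp]: "lasso_pos i j 0 = 0"
  by (simp add: lasso_pos_def)

lemma lasso_pos_Suc:
  assumes "i < j"
  shows "lasso_pos i j (Suc n) =
           (if Suc (lasso_pos i j n) = j then i else Suc (lasso_pos i j n))"
  using assms by (auto simp: lasso_pos_def Suc_diff_le mod_Suc)

lemma lasso_pos_periodic:
  assumes "i \<le> a" "a < j"
  shows "lasso_pos i j (a + m * (j - i)) = a"
proof -
  have not_less: "\<not> a + m * (j - i) < i"
    and shift: "a + m * (j - i) - i = (a - i) + m * (j - i)"
    using assms by simp_all
  have "lasso_pos i j (a + m * (j - i)) = i + ((a - i) + m * (j - i)) mod (j - i)"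
    by (simp only: lasso_pos_def not_less shift if_False)
  also have "\<dots> = a"
    by (simp only: mod_mult_self1) (use assms in simp)
  finally show ?thesis .
qed

lemma INFM_lasso_pos:
  assumes "i \<le> a" "a < j"
  shows "\<exists>\<^sub>\<infinity>n. lasso_pos i j n = a"
  unfolding INFM_nat
proof
  fix m
  define d where "d = j - i"
  have "0 < d"
    using assms by (simp add: d_def)
  then have "m * 1 \<le> m * d"
    by (intro mult_le_mono2) simp
  with \<open>0 < d\<close> have "m < a + Suc m * d"
    unfolding mult_Suc by linarith
  then show "\<exists>n>m. lasso_pos i j n = a"
    using lasso_pos_periodic[OF assms] unfolding d_def by blast
qed

lemma lasso_conv_lasso_pos:
  assumes "i < j"
  shows "prefix i x \<frown> (x [i \<rightarrow> j])\<^sup>\<omega> = x \<circ> lasso_pos i j"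
  using assms by (simp add: fun_eq_iff lasso_pos_def)

lemma lasso_prefix:
  assumes "i \<le> j"
  shows "prefix (length (prefix i x @ (x [i \<rightarrow> j]))) x = prefix i x @ (x [i \<rightarrow> j])"
proof -
  have "length (prefix i x @ (x [i \<rightarrow> j])) = i + (j - i)"
    by simp
  then show ?thesis
    by (simp only: subsequence_append) (use assms in simp)
qed

lemma run_lasso_pos_Suc:
  assumes "i < j" "r i = r j"
  shows "r (lasso_pos i j (Suc n)) = r (Suc (lasso_pos i j n))"
  using assms by (simp add: lasso_pos_Suc)

lemma buchi_lang_lasso:
  assumes init: "r 0 \<in> I" and run: "\<forall>n. r (Suc n) \<in> \<delta> (r n) (x n)"
    and "i < j" "r i = r j" "i \<le> a" "a < j" "r a \<in> F"
  shows "prefix i x \<frown> (x [i \<rightarrow> j])\<^sup>\<omega> \<in> buchi_lang I \<delta> F"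
proof -
  let ?p = "lasso_pos i j"
  have "(r \<circ> ?p) (Suc n) \<in> \<delta> ((r \<circ> ?p) n) ((x \<circ> ?p) n)" for n
    using run run_lasso_pos_Suc[OF \<open>i < j\<close> \<open>r i = r j\<close>] by simp
  moreover have "\<exists>\<^sub>\<infinity>n. (r \<circ> ?p) n \<in> F"
    using INFM_lasso_pos[OF \<open>i \<le> a\<close> \<open>a < j\<close>] \<open>r a \<in> F\<close> by (simp add: INFM_mono)
  ultimately show ?thesis
    unfolding buchi_lang_def lasso_conv_lasso_pos[OF \<open>i < j\<close>] mem_Collect_eq
    using init by (intro exI[of _ "r \<circ> ?p"]) simp
qed

lemma omega_regular_accepting_run:
  assumes "omega_regular L" "x \<in> L"
  obtains I \<delta> F r where "L = buchi_lang I \<delta> F" "finite (range r)" "r 0 \<in> I"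
    "\<forall>n. r (Suc n) \<in> \<delta> (r n) (x n)" "\<exists>\<^sub>\<infinity>n. r n \<in> F"
proof -
  obtain Q I \<delta> F where Q: "finite Q" "I \<subseteq> Q" "\<forall>q a. q \<in> Q \<longrightarrow> \<delta> q a \<subseteq> Q"
    and L: "L = buchi_lang I \<delta> F"
    using assms(1) unfolding omega_regular_def by blast
  obtain r where r: "r 0 \<in> I" "\<forall>n. r (Suc n) \<in> \<delta> (r n) (x n)" "\<exists>\<^sub>\<infinity>n. r n \<in> F"
    using assms(2) unfolding L buchi_lang_def by blast
  have "range r \<subseteq> Q"
  proof (intro image_subsetI)
    fix n
    show "r n \<in> Q"
    proof (induction n)
      case 0
      show ?case using r(1) Q(2) by blast
    next
      case (Suc n)
      show ?case using Suc r(2) Q(3) by blast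
    qed
  qed
  then have "finite (range r)"
    using Q(1) by (rule finite_subset)
  with L r show ?thesis
    using that by blast
qed

lemma finite_range_recurrent_segment:
  fixes p :: "nat \<Rightarrow> 'b"
  assumes "finite (range p)" "\<exists>\<^sub>\<infinity>n. P n" "\<exists>\<^sub>\<infinity>n. Q n"
  obtains i j a b where "i < j" "p i = p j" "i \<le> a" "a < j" "P a" "i \<le> b" "b < j" "Q b"
proof -
  obtain i where recurrent: "infinite {n. p n = p i}"
    using pigeonhole_infinite[of UNIV p] assms(1) by auto
  obtain a where "i < a" "P a"
    using assms(2) unfolding INFM_nat by blast
  obtain b where "i < b" "Q b"
    using assms(3) unfolding INFM_nat by blast
  obtain j where "max a b < j" "p j = p i"
    using recurrent[unfolded infinite_nat_iff_unbounded, rule_format, of "max a b"] by auto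
  then show ?thesis
    using \<open>i < a\<close> \<open>P a\<close> \<open>i < b\<close> \<open>Q b\<close> by (intro that[of i j a b]) auto
qed

lemma omega_regular_common_lasso:
  assumes "omega_regular A" "omega_regular B" "x \<in> A" "x \<in> B"
  obtains i j where "i < j" "prefix i x \<frown> (x [i \<rightarrow> j])\<^sup>\<omega> \<in> A"
    "prefix i x \<frown> (x [i \<rightarrow> j])\<^sup>\<omega> \<in> B"
proof -
  obtain I\<^sub>A \<delta>\<^sub>A F\<^sub>A r\<^sub>A where A: "A = buchi_lang I\<^sub>A \<delta>\<^sub>A F\<^sub>A" "finite (range r\<^sub>A)"
    "r\<^sub>A 0 \<in> I\<^sub>A" "\<forall>n. r\<^sub>A (Suc n) \<in> \<delta>\<^sub>A (r\<^sub>A n) (x n)" "\<exists>\<^sub>\<infinity>n. r\<^sub>A n \<in> F\<^sub>A"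
    using omega_regular_accepting_run[OF assms(1,3)] .
  obtain I\<^sub>B \<delta>\<^sub>B F\<^sub>B r\<^sub>B where B: "B = buchi_lang I\<^sub>B \<delta>\<^sub>B F\<^sub>B" "finite (range r\<^sub>B)"
    "r\<^sub>B 0 \<in> I\<^sub>B" "\<forall>n. r\<^sub>B (Suc n) \<in> \<delta>\<^sub>B (r\<^sub>B n) (x n)" "\<exists>\<^sub>\<infinity>n. r\<^sub>B n \<in> F\<^sub>B"
    using omega_regular_accepting_run[OF assms(2,4)] .
  have "finite (range (\<lambda>n. (r\<^sub>A n, r\<^sub>B n)))"
    by (rule finite_subset[OF _ finite_cartesian_product[OF A(2) B(2)]]) auto
  then obtain i j a b where "i < j" "(r\<^sub>A i, r\<^sub>B i) = (r\<^sub>A j, r\<^sub>B j)"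
    and a: "i \<le> a" "a < j" "r\<^sub>A a \<in> F\<^sub>A" and b: "i \<le> b" "b < j" "r\<^sub>B b \<in> F\<^sub>B"
    using finite_range_recurrent_segment[OF _ A(5) B(5)] by blast
  then have loop: "r\<^sub>A i = r\<^sub>A j" "r\<^sub>B i = r\<^sub>B j"
    by simp_all
  have "prefix i x \<frown> (x [i \<rightarrow> j])\<^sup>\<omega> \<in> A"
    unfolding A(1)
    by (rule buchi_lang_lasso[where r = r\<^sub>A and x = x, OF A(3,4) \<open>i < j\<close> loop(1) a])
  moreover have "prefix i x \<frown> (x [i \<rightarrow> j])\<^sup>\<omega> \<in> B"
    unfolding B(1)
    by (rule buchi_lang_lasso[where r = r\<^sub>B and x = x, OF B(3,4) \<open>i < j\<close> loop(2) b])
  ultimately show ?thesis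
    using \<open>i < j\<close> that by blast
qed

lemma omega_recognizable_lasso:
  assumes "omega_recognizable R" "(x, x) \<in> R"
  obtains i j where "i < j" "(x, prefix i x \<frown> (x [i \<rightarrow> j])\<^sup>\<omega>) \<in> R"
    "(prefix i x \<frown> (x [i \<rightarrow> j])\<^sup>\<omega>, x) \<in> R"
proof -
  obtain l :: nat and X Y where reg: "\<forall>k\<in>{1..l}. omega_regular (X k) \<and> omega_regular (Y k)"
    and R: "R = (\<Union>k\<in>{1..l}. X k \<times> Y k)"
    using assms(1) unfolding omega_recognizable_def by blast
  obtain k where k: "k \<in> {1..l}" "x \<in> X k" "x \<in> Y k"
    using assms(2) unfolding R by blast
  then have "omega_regular (X k)" "omega_regular (Y k)"
    using reg by auto
  then obtain i j where "i < j" "prefix i x \<frown> (x [i \<rightarrow> j])\<^sup>\<omega> \<in> X k"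
    "prefix i x \<frown> (x [i \<rightarrow> j])\<^sup>\<omega> \<in> Y k"
    using k(2,3) by (rule omega_regular_common_lasso)
  with k show ?thesis
    by (intro that[of i j]) (auto simp: R)
qed

theorem lemma17:
  fixes R :: "(('a::finite) word \<times> 'a word) set"
  assumes "omega_recognizable R"
    and "preorder_on UNIV R"
  shows "(\<forall>x. \<exists>\<mu> \<nu>. \<nu> \<noteq> [] \<and> induced_equiv R x (\<mu> \<frown> \<nu>\<^sup>\<omega>))
       \<and> (\<forall>x. \<exists>\<mu> \<nu>. \<nu> \<noteq> [] \<and> prefix (length (\<mu> @ \<nu>)) x = \<mu> @ \<nu>
                    \<and> induced_equiv R x (\<mu> \<frown> \<nu>\<^sup>\<omega>))"
proof -
  have prefix_lasso: "\<exists>\<mu> \<nu>. \<nu> \<noteq> [] \<and> prefix (length (\<mu> @ \<nu>)) x = \<mu> @ \<nu>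
                    \<and> induced_equiv R x (\<mu> \<frown> \<nu>\<^sup>\<omega>)" for x
  proof -
    have "(x, x) \<in> R"
      using assms(2) unfolding preorder_on_def refl_on_def by blast
    then obtain i j where "i < j" "(x, prefix i x \<frown> (x [i \<rightarrow> j])\<^sup>\<omega>) \<in> R"
      "(prefix i x \<frown> (x [i \<rightarrow> j])\<^sup>\<omega>, x) \<in> R"
      using omega_recognizable_lasso[OF assms(1)] by blast
    moreover have "x [i \<rightarrow> j] \<noteq> []"
      using \<open>i < j\<close> by (simp flip: length_greater_0_conv)
    ultimately show ?thesis
      unfolding induced_equiv_def using lasso_prefix[of i j x]
      by (intro exI[of _ "prefix i x"] exI[of _ "x [i \<rightarrow> j]"]) simp
  qed
  then show ?thesis
    by blast
qed

end
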